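(* Given an integer $l\ge0$, there exists a constant $c>0$ such that for all integers $n\le cN$ and all $k\ge1$, $$\int_{kT/2}^\infty dx\,(\psi_n(x))^2x^l=(\nu_1(N))^k,$$ where $T=\sqrt{2\pi N}$.
   Context: $\psi_n(x)=(2^nn!\sqrt\pi)^{-1/2}e^{-x^2/2}H_n(x)$ is the $n$-th Hermite function ($H_n$ the physicists' Hermite polynomial). $N\ge4$ is an integer (the dimension of the discrete system), and statements are asymptotic in $N$. $\nu_1(N)$ denotes a quantity that is $\exp(-\Omega(N))$, i.e., there is a constant $\beta>0$ such that it is at most $e^{-\beta N}$ for sufficiently large $N$. *)

theory Defs
  imports "HOL-Analysis.Analysis"
begin

fun hermite_H :: "nat \<Rightarrow> real \<Rightarrow> real" where
  "hermite_H 0 x = 1"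
| "hermite_H (Suc 0) x = 2 * x"
| "hermite_H (Suc (Suc n)) x = 2 * x * hermite_H (Suc n) x - 2 * real (Suc n) * hermite_H n x"

definition hermite_psi :: "nat \<Rightarrow> real \<Rightarrow> real" where
  "hermite_psi n x = (2 ^ n * fact n * sqrt pi) powr (-1/2) * exp (- x\<^sup>2 / 2) * hermite_H n x"

end

theory Submission
  imports Defs
begin

text \<open>
  For 32n \<le> x^2 the three-term recurrence gives |H_n(x)| \<le> (3x)^n, hence
  psi_n(x)^2 \<le> e^(-x^2) (9x^2/2)^n / n! \<le> e^(-x^2) 36^n e^(x^2/8) \<le> e^(-3x^2/4), and x^l costs at
  most l! e^(x^2/4 + 1). Beyond a \<ge> sqrt(32n) the integrand is therefore dominated by
  l! e^2 e^(-a^2/4) e^(-x). For a = kT/2 we have a^2 \<ge> 3kN/2, so the tail is at most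
  l! e^2 e^(-3kN/8) \<le> e^(-kN/4) as soon as N \<ge> 8 l! e^2.
\<close>

lemma sum_power_div_fact_le_exp:
  fixes x :: real
  assumes "x \<ge> 0" "finite I"
  shows "(\<Sum>i\<in>I. x ^ i / fact i) \<le> exp x"
proof -
  have exp_sums: "(\<lambda>n. x ^ n /\<^sub>R fact n) sums exp x" by (rule exp_converges)
  have "sum (\<lambda>n. x ^ n /\<^sub>R fact n) I \<le> suminf (\<lambda>n. x ^ n /\<^sub>R fact n)"
    using sums_summable[OF exp_sums] assms by (intro sum_le_suminf) auto
  then show ?thesis using sums_unique[OF exp_sums] by (simp add: divide_inverse mult.commute)
qed

lemma power_div_fact_le_exp:
  fixes x :: real
  assumes "x \<ge> 0"
  shows "x ^ n / fact n \<le> exp x"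
  using sum_power_div_fact_le_exp[OF assms, of "{n}"] by simp

lemma exp_4_ge_36: "36 \<le> exp (4::real)"
proof -
  have "(\<Sum>i\<in>{..<6}. (4::real) ^ i / fact i) \<le> exp 4"
    by (rule sum_power_div_fact_le_exp) auto
  moreover have "(\<Sum>i\<in>{..<6}. (4::real) ^ i / fact i) \<ge> 36"
    by (simp add: eval_nat_numeral fact_numeral)
  ultimately show ?thesis by linarith
qed

lemma le_square_div_4_plus_1:
  fixes x :: real
  shows "x \<le> x\<^sup>2 / 4 + 1"
  using zero_le_power2[of "x - 2"] by (simp add: power2_eq_square algebra_simps)

lemma continuous_on_hermite_H: "continuous_on S (hermite_H n)"
proof -
  have "continuous_on UNIV (hermite_H n) \<and> continuous_on UNIV (hermite_H (Suc n))"
    by (induction n) (auto intro!: continuous_intros)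
  then show ?thesis using continuous_on_subset by blast
qed

lemma abs_hermite_H_le:
  fixes x :: real
  assumes "x \<ge> 0" "real n \<le> x\<^sup>2"
  shows "\<bar>hermite_H n x\<bar> \<le> (3 * x) ^ n"
  using assms(2)
proof (induction n rule: less_induct)
  case (less n)
  consider "n = 0" | "n = Suc 0" | m where "n = Suc (Suc m)"
    by (metis not0_implies_Suc)
  then show ?case
  proof cases
    case 3
    have IH1: "\<bar>hermite_H (Suc m) x\<bar> \<le> (3 * x) ^ Suc m"
      using 3 less.prems by (intro less.IH) auto
    have IH0: "\<bar>hermite_H m x\<bar> \<le> (3 * x) ^ m"
      using 3 less.prems by (intro less.IH) auto
    have "\<bar>hermite_H n x\<bar> = \<bar>2 * x * hermite_H (Suc m) x - 2 * real (Suc m) * hermite_H m x\<bar>"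
      using 3 by simp
    also have "\<dots> \<le> \<bar>2 * x * hermite_H (Suc m) x\<bar> + \<bar>2 * real (Suc m) * hermite_H m x\<bar>"
      by (rule abs_triangle_ineq4)
    also have "\<dots> = 2 * x * \<bar>hermite_H (Suc m) x\<bar> + 2 * real (Suc m) * \<bar>hermite_H m x\<bar>"
      using assms(1) by (simp add: abs_mult)
    also have "\<dots> \<le> 2 * x * (3 * x) ^ Suc m + 2 * real (Suc m) * (3 * x) ^ m"
      using IH1 IH0 assms(1) by (intro add_mono mult_left_mono) auto
    also have "\<dots> = (3 * x) ^ m * (6 * x\<^sup>2 + 2 * real (Suc m))"
      by (simp add: algebra_simps power2_eq_square)
    also have "\<dots> \<le> (3 * x) ^ m * (9 * x\<^sup>2)"
      using 3 less.prems assms(1) by (intro mult_left_mono) auto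
    also have "\<dots> = (3 * x) ^ n"
      using 3 by (simp add: algebra_simps power2_eq_square)
    finally show ?thesis .
  qed (use assms in auto)
qed

lemma hermite_psi_sq_le:
  fixes x :: real
  assumes "x \<ge> 0" "32 * real n \<le> x\<^sup>2"
  shows "(hermite_psi n x)\<^sup>2 \<le> exp (- (3/4) * x\<^sup>2)"
proof -
  define A where "A = 2 ^ n * fact n * sqrt pi"
  have A_pos: "A > 0" unfolding A_def by simp
  have A_ge: "2 ^ n * fact n \<le> A"
    unfolding A_def using pi_gt3 by (intro mult_le_cancel_left1[THEN iffD2]) (auto simp: not_less)
  have "(A powr (-1/2))\<^sup>2 = 1 / A"
    using A_pos by (simp add: power2_eq_square powr_add[symmetric] powr_minus_divide)
  then have psi_sq: "(hermite_psi n x)\<^sup>2 = exp (- x\<^sup>2) * (hermite_H n x)\<^sup>2 / A"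
    unfolding hermite_psi_def A_def[symmetric] power_mult_distrib
    by (simp add: power2_eq_square exp_add[symmetric])
  have "real n \<le> x\<^sup>2" using assms(2) by simp
  then have "(hermite_H n x)\<^sup>2 \<le> ((3 * x) ^ n)\<^sup>2"
    using abs_hermite_H_le[OF assms(1)] by (metis abs_ge_zero power2_abs power_mono)
  also have "\<dots> = ((3 * x)\<^sup>2) ^ n"
    by (metis power_mult mult.commute)
  also have "(3 * x)\<^sup>2 = 2 * 36 * (x\<^sup>2 / 8)"
    by (simp add: power2_eq_square)
  also have "(2 * 36 * (x\<^sup>2 / 8)) ^ n = 2 ^ n * 36 ^ n * (x\<^sup>2 / 8) ^ n"
    by (simp only: power_mult_distrib)
  finally have "(hermite_psi n x)\<^sup>2 \<le> exp (- x\<^sup>2) * (2 ^ n * 36 ^ n * (x\<^sup>2 / 8) ^ n) / (2 ^ n * fact n)"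
    unfolding psi_sq using A_pos A_ge by (intro frac_le mult_left_mono) auto
  also have "\<dots> = exp (- x\<^sup>2) * 36 ^ n * ((x\<^sup>2 / 8) ^ n / fact n)"
    by (simp add: field_simps)
  also have "\<dots> \<le> exp (- x\<^sup>2) * exp 4 ^ n * exp (x\<^sup>2 / 8)"
    using exp_4_ge_36 power_div_fact_le_exp[of "x\<^sup>2 / 8" n]
    by (intro mult_mono power_mono) auto
  also have "\<dots> = exp (- x\<^sup>2 + 4 * real n + x\<^sup>2 / 8)"
    by (simp only: exp_add exp_of_nat_mult[symmetric] mult.commute)
  also have "\<dots> \<le> exp (- (3/4) * x\<^sup>2)"
    using assms(2) by simp
  finally show ?thesis .
qed

lemma hermite_moment_le:
  fixes x :: real
  assumes "x \<ge> 0" "32 * real n \<le> x\<^sup>2"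
  shows "(hermite_psi n x)\<^sup>2 * x ^ l \<le> fact l * exp (1 - x\<^sup>2 / 2)"
proof -
  have "x ^ l \<le> fact l * exp x"
    using power_div_fact_le_exp[OF assms(1), of l] by (simp add: field_simps)
  also have "\<dots> \<le> fact l * exp (x\<^sup>2 / 4 + 1)"
    using le_square_div_4_plus_1[of x] by simp
  finally have "(hermite_psi n x)\<^sup>2 * x ^ l \<le> exp (- (3/4) * x\<^sup>2) * (fact l * exp (x\<^sup>2 / 4 + 1))"
    using hermite_psi_sq_le[OF assms] assms(1) by (intro mult_mono) auto
  also have "\<dots> = fact l * exp (1 - x\<^sup>2 / 2)"
    by (simp add: exp_add[symmetric] algebra_simps)
  finally show ?thesis .
qed

lemma hermite_moment_tail:
  fixes a :: real and l :: nat
  assumes "a \<ge> 0" "32 * real n \<le> a\<^sup>2"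
  defines "f \<equiv> \<lambda>x. (hermite_psi n x)\<^sup>2 * x ^ l"
  shows "f integrable_on {a..}" "integral {a..} f \<le> fact l * exp 2 * exp (- a\<^sup>2 / 4)"
proof -
  define C where "C = fact l * exp 2 * exp (- a\<^sup>2 / 4)"
  define g where "g = (\<lambda>x::real. C * exp (- 1 * x))"
  have dominated: "\<bar>f x\<bar> \<le> g x" if "x \<in> {a..}" for x
  proof -
    have x: "a \<le> x" "0 \<le> x" using that assms(1) by auto
    have "a\<^sup>2 \<le> x\<^sup>2" using x assms(1) by (intro power_mono)
    have "\<bar>f x\<bar> = f x" using x by (simp add: f_def)
    also have "\<dots> \<le> fact l * exp (1 - x\<^sup>2 / 2)"
      unfolding f_def using x \<open>a\<^sup>2 \<le> x\<^sup>2\<close> assms(2) by (intro hermite_moment_le) auto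
    also have "\<dots> \<le> g x"
      unfolding g_def C_def using \<open>a\<^sup>2 \<le> x\<^sup>2\<close> le_square_div_4_plus_1[of x]
      by (simp add: mult.assoc exp_add[symmetric])
    finally show ?thesis .
  qed
  have g_integral: "(g has_integral C * (exp (- 1 * a) / 1)) {a..}"
    unfolding g_def by (intro has_integral_mult_right has_integral_exp_minus_to_infinity) auto
  have "continuous_on {a..} f"
    unfolding f_def hermite_psi_def by (auto intro!: continuous_intros continuous_on_hermite_H)
  then have f_measurable: "f \<in> borel_measurable (lebesgue_on {a..})"
    by (simp add: continuous_imp_measurable_on_sets_lebesgue)
  have g_integrable: "g integrable_on {a..}"
    using g_integral by blast
  show f_integrable: "f integrable_on {a..}"
    by (rule measurable_bounded_by_integrable_imp_integrable_real[OF f_measurable g_integrable dominated])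
      simp_all
  have "integral {a..} f \<le> integral {a..} g"
    using f_integrable g_integrable dominated
    by (intro integral_le) (auto intro: order_trans[OF abs_ge_self])
  also have "\<dots> = C * exp (- a)"
    using g_integral by (simp add: integral_unique)
  also have "\<dots> \<le> C"
    using assms(1) by (simp add: C_def mult_left_le)
  finally show "integral {a..} f \<le> fact l * exp 2 * exp (- a\<^sup>2 / 4)"
    unfolding C_def .
qed

lemma sq_tail_start_ge:
  fixes k N :: nat
  assumes "k \<ge> 1"
  shows "3/2 * real k * real N \<le> (real k * sqrt (2 * pi * real N) / 2)\<^sup>2"
proof -
  have "3 * real k \<le> (real k)\<^sup>2 * pi"
    using assms pi_gt3 mult_mono[of 3 pi "real k" "(real k)\<^sup>2"] by (simp add: power2_eq_square mult.commute)
  then have "3 * real k * real N \<le> (real k)\<^sup>2 * pi * real N"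
    by (intro mult_right_mono) auto
  moreover have "(real k * sqrt (2 * pi * real N) / 2)\<^sup>2 = (real k)\<^sup>2 * pi * real N / 2"
    by (simp add: power_mult_distrib power_divide)
  ultimately show ?thesis
    by simp
qed

lemma gaussian_factor_le_power:
  fixes C a :: real and k N :: nat
  assumes "8 * C \<le> real N" "k \<ge> 1" "3/2 * real k * real N \<le> a\<^sup>2"
  shows "C * exp (- a\<^sup>2 / 4) \<le> exp (- (1/4) * real N) ^ k"
proof -
  have "C \<le> 1 + real N / 8" using assms(1) by simp
  also have "\<dots> \<le> exp (real N / 8)" by (rule exp_ge_add_one_self)
  also have "\<dots> \<le> exp (real k * real N / 8)"
    using assms(2) mult_right_mono[of 1 "real k" "real N"] by simp
  finally have "C * exp (- a\<^sup>2 / 4) \<le> exp (real k * real N / 8) * exp (- a\<^sup>2 / 4)"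
    by (intro mult_right_mono) auto
  also have "\<dots> \<le> exp (real k * (- (1/4) * real N))"
    using assms(3) by (simp add: exp_add[symmetric])
  also have "\<dots> = exp (- (1/4) * real N) ^ k"
    by (rule exp_of_nat_mult)
  finally show ?thesis .
qed

theorem lemma1:
  fixes l :: nat
  shows "\<exists>c>0. \<exists>\<beta>>0. \<exists>N0::nat. \<forall>N::nat. N \<ge> 4 \<and> N \<ge> N0 \<longrightarrow>
    (\<forall>(n::nat) (k::nat). real n \<le> c * real N \<and> k \<ge> 1 \<longrightarrow>
      (let T = sqrt (2 * pi * real N) in
        (\<lambda>x. (hermite_psi n x)\<^sup>2 * x ^ l) integrable_on {real k * T / 2..} \<and>
        integral {real k * T / 2..} (\<lambda>x. (hermite_psi n x)\<^sup>2 * x ^ l) \<le> (exp (- \<beta> * real N)) ^ k))"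
proof (rule exI[of _ "1/32"], intro conjI exI[of _ "1/4 :: real"]
    exI[of _ "nat \<lceil>8 * fact l * exp (2::real)\<rceil>"] allI impI)
  fix N n k :: nat
  assume N: "4 \<le> N \<and> nat \<lceil>8 * fact l * exp (2::real)\<rceil> \<le> N" and nk: "real n \<le> 1/32 * real N \<and> 1 \<le> k"
  define a where "a = real k * sqrt (2 * pi * real N) / 2"
  have a_sq: "3/2 * real k * real N \<le> a\<^sup>2"
    unfolding a_def using nk by (intro sq_tail_start_ge) simp
  moreover have "real N \<le> 3/2 * real k * real N"
    using nk mult_right_mono[of 1 "real k" "real N"] by simp
  ultimately have "32 * real n \<le> a\<^sup>2"
    using nk by linarith
  moreover have "a \<ge> 0"
    unfolding a_def by simp
  moreover have "fact l * exp 2 * exp (- a\<^sup>2 / 4) \<le> exp (- (1/4) * real N) ^ k"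
    using N nk a_sq real_nat_ceiling_ge[of "8 * fact l * exp (2::real)"]
    by (intro gaussian_factor_le_power) auto
  ultimately show "let T = sqrt (2 * pi * real N) in
      (\<lambda>x. (hermite_psi n x)\<^sup>2 * x ^ l) integrable_on {real k * T / 2..} \<and>
      integral {real k * T / 2..} (\<lambda>x. (hermite_psi n x)\<^sup>2 * x ^ l) \<le> exp (- (1/4) * real N) ^ k"
    using hermite_moment_tail[of a n l] unfolding Let_def a_def[symmetric] by fastforce
qed (simp_all)

end
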